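(* Let $\mathcal{H}$ be a Hilbert space, $h\in\mathcal{H}$, and $\mathcal{L}$ a nonempty set of closed subspaces of $\mathcal{H}$. Define $\mathcal{C}: 2^{\mathcal{L}}\to 2^{\mathcal{L}}$ by: for $A\subseteq\mathcal{L}$ and $b\in\mathcal{L}$, $b\in\mathcal{C}(A)$ iff $A^*_p(h)\in b$. Then $\mathcal{C}$ is an L-logics, i.e. it satisfies Inclusion ($A\subseteq\mathcal{C}(A)$ for all $A\subseteq\mathcal{L}$) and Loop: for every $n\ge 1$ and all $A_0,\dots,A_{n-1}\subseteq\mathcal{L}$, if $A_i\subseteq\mathcal{C}(A_{i+1})$ for every $i=0,\dots,n-1$ (indices modulo $n$), then $\mathcal{C}(A_0)=\mathcal{C}(A_1)$.
   Context: For $A\subseteq\mathcal{L}$, $A^* = \bigcap_{a\in A} a$ (a closed subspace of $\mathcal{H}$; $A^*=\mathcal{H}$ when $A=\emptyset$), and $A^*_p$ denotes the orthogonal projection onto $A^*$, so $A^*_p(h)$ is the element of $A^*$ closest to $h$. *)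

theory Defs
  imports "HOL-Analysis.Analysis"
begin

definition closed_subspace :: "'a::{real_inner,complete_space} set \<Rightarrow> bool" where
  "closed_subspace S \<longleftrightarrow> subspace S \<and> closed S"

text \<open>A star: the intersection of A (the whole space for A empty).\<close>
definition star :: "'a set set \<Rightarrow> 'a set" where
  "star A = \<Inter> A"

definition proj :: "'a::{real_inner,complete_space} set \<Rightarrow> 'a \<Rightarrow> 'a" where
  "proj S h = (THE x. x \<in> S \<and> (\<forall>y\<in>S. dist h x \<le> dist h y))"

definition L_logic :: "'b set \<Rightarrow> ('b set \<Rightarrow> 'b set) \<Rightarrow> bool" where
  "L_logic L C \<longleftrightarrow>
     (\<forall>A. A \<subseteq> L \<longrightarrow> A \<subseteq> C A) \<and>
     (\<forall>n::nat. n \<ge> 1 \<longrightarrow> (\<forall>As :: nat \<Rightarrow> 'b set.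
        (\<forall>i<n. As i \<subseteq> L) \<and> (\<forall>i<n. As i \<subseteq> C (As ((i + 1) mod n)))
        \<longrightarrow> C (As 0) = C (As (1 mod n))))"

end

theory Submission
  imports Defs
begin

text \<open>
  The projection \<open>p\<^sub>i = (A\<^sub>i)\<^sup>*\<^sub>p(h)\<close> minimizes the distance to \<open>h\<close> over \<open>(A\<^sub>i)\<^sup>*\<close>. The hypothesis
  \<open>A\<^sub>i \<subseteq> \<C>(A\<^sub>i\<^sub>+\<^sub>1)\<close> says \<open>p\<^sub>i\<^sub>+\<^sub>1 \<in> (A\<^sub>i)\<^sup>*\<close>, so \<open>dist h p\<^sub>i \<le> dist h p\<^sub>i\<^sub>+\<^sub>1\<close>. Around a cycle these
  inequalities force all distances to be equal; then \<open>p\<^sub>1\<close> is a point of \<open>(A\<^sub>0)\<^sup>*\<close> at minimal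
  distance from \<open>h\<close>, and uniqueness of the closest point in a closed convex set gives
  \<open>p\<^sub>0 = p\<^sub>1\<close>, whence \<open>\<C>(A\<^sub>0) = \<C>(A\<^sub>1)\<close>. Inclusion is just \<open>p \<in> A\<^sup>*\<close>. The only analytic input is
  the existence of closest points in a Hilbert space.
\<close>

text \<open>Parallelogram law applied to \<open>h - x\<close>, \<open>h - y\<close>, using that the midpoint of \<open>x\<close>, \<open>y\<close> lies in \<open>S\<close>.\<close>
lemma norm_diff_sq_le_near_infimum:
  fixes S :: "'a::real_inner set"
  assumes "convex S" "x \<in> S" "y \<in> S" "0 \<le> d" "\<And>z. z \<in> S \<Longrightarrow> d \<le> dist h z"
  shows "(norm (x - y))\<^sup>2 \<le> 2 * (dist h x)\<^sup>2 + 2 * (dist h y)\<^sup>2 - 4 * d\<^sup>2"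
proof -
  define m where "m = (1/2) *\<^sub>R x + (1/2) *\<^sub>R y"
  have "m \<in> S"
    unfolding m_def using assms(1-3) by (intro convexD) auto
  moreover have "(h - x) + (h - y) = 2 *\<^sub>R (h - m)"
    unfolding m_def by (simp add: algebra_simps scaleR_2)
  ultimately have "2 * d \<le> norm ((h - x) + (h - y))"
    using assms(5) by (simp add: dist_norm)
  then have "(2 * d)\<^sup>2 \<le> (norm ((h - x) + (h - y)))\<^sup>2"
    using assms(4) by (intro power_mono) auto
  then have "4 * d\<^sup>2 \<le> (norm ((h - x) + (h - y)))\<^sup>2"
    by (simp add: power_mult_distrib)
  moreover have "(norm ((h - x) + (h - y)))\<^sup>2 + (norm (x - y))\<^sup>2 = 2 * (dist h x)\<^sup>2 + 2 * (dist h y)\<^sup>2"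
    by (simp add: dist_norm power2_norm_eq_inner algebra_simps inner_commute)
  ultimately show ?thesis
    by linarith
qed

lemma Hilbert_closest_point_exists:
  fixes S :: "'a::{real_inner,complete_space} set"
  assumes "convex S" "closed S" "S \<noteq> {}"
  obtains x where "x \<in> S" "\<And>y. y \<in> S \<Longrightarrow> dist h x \<le> dist h y"
proof -
  define d where "d = Inf (dist h ` S)"
  have bdd: "bdd_below (dist h ` S)"
    by (rule bdd_belowI[of _ 0]) auto
  have d_le: "d \<le> dist h y" if "y \<in> S" for y
    unfolding d_def using bdd that by (auto intro: cInf_lower)
  have "0 \<le> d"
    unfolding d_def using assms(3) by (auto intro: cInf_greatest)
  have "d \<in> closure (dist h ` S)"
    unfolding d_def using assms(3) bdd by (intro closure_contains_Inf) auto
  then obtain r where r: "\<forall>n. r n \<in> dist h ` S" "r \<longlonglongrightarrow> d"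
    unfolding closure_sequential by blast
  then have "\<forall>n. \<exists>z. z \<in> S \<and> r n = dist h z"
    by blast
  then obtain y where y: "\<forall>n. y n \<in> S \<and> r n = dist h (y n)"
    by metis
  then have yS: "\<And>n. y n \<in> S" and "r = (\<lambda>n. dist h (y n))"
    by auto
  with r(2) have y_lim: "(\<lambda>n. dist h (y n)) \<longlonglongrightarrow> d"
    by simp
  define \<epsilon> where "\<epsilon> n = (dist h (y n))\<^sup>2 - d\<^sup>2" for n
  have "\<epsilon> \<longlonglongrightarrow> 0"
    unfolding \<epsilon>_def using tendsto_diff[OF tendsto_power[OF y_lim, of 2] tendsto_const[of "d\<^sup>2"]]
    by simp
  have "Cauchy y"
  proof (rule CauchyI)
    fix e :: real
    assume "0 < e"
    then have "0 < e\<^sup>2 / 4"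
      by simp
    from LIMSEQ_D[OF \<open>\<epsilon> \<longlonglongrightarrow> 0\<close> this] obtain M where "\<forall>n\<ge>M. norm (\<epsilon> n - 0) < e\<^sup>2 / 4"
      by blast
    then have M: "\<epsilon> n < e\<^sup>2 / 4" if "n \<ge> M" for n
      using that by auto
    have "norm (y m - y n) < e" if "m \<ge> M" "n \<ge> M" for m n
    proof -
      have "(norm (y m - y n))\<^sup>2 \<le> 2 * \<epsilon> m + 2 * \<epsilon> n"
        using norm_diff_sq_le_near_infimum[OF assms(1) yS yS \<open>0 \<le> d\<close> d_le] by (simp add: \<epsilon>_def)
      also have "\<dots> < e\<^sup>2"
        using M[OF \<open>m \<ge> M\<close>] M[OF \<open>n \<ge> M\<close>] by simp
      finally show ?thesis
        using \<open>0 < e\<close> by (simp add: power2_less_imp_less)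
    qed
    then show "\<exists>M. \<forall>m\<ge>M. \<forall>n\<ge>M. norm (y m - y n) < e"
      by blast
  qed
  then obtain x where "y \<longlonglongrightarrow> x"
    using Cauchy_convergent_iff convergent_def by blast
  then have "x \<in> S"
    using assms(2) yS closed_sequentially by blast
  have "(\<lambda>n. dist h (y n)) \<longlonglongrightarrow> dist h x"
    using \<open>y \<longlonglongrightarrow> x\<close> by (intro tendsto_intros)
  then have "dist h x = d"
    using y_lim LIMSEQ_unique by blast
  then show thesis
    using that \<open>x \<in> S\<close> d_le by simp
qed

lemma closed_subspace_star:
  assumes "\<forall>b\<in>A. closed_subspace b"
  shows "closed_subspace (star A)"
  using assms unfolding closed_subspace_def star_def by (auto intro: subspace_Inter)

lemma
  assumes "closed_subspace S"
  shows proj_in: "proj S h \<in> S"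
    and dist_proj_le: "y \<in> S \<Longrightarrow> dist h (proj S h) \<le> dist h y"
proof -
  have S: "convex S" "closed S" "S \<noteq> {}"
    using assms by (auto simp: closed_subspace_def subspace_imp_convex dest: subspace_0)
  obtain x where "x \<in> S" "\<And>y. y \<in> S \<Longrightarrow> dist h x \<le> dist h y"
    using Hilbert_closest_point_exists[OF S] by blast
  then have "\<exists>!x. x \<in> S \<and> (\<forall>y\<in>S. dist h x \<le> dist h y)"
    using any_closest_point_unique[OF S(1,2)] by blast
  then have "proj S h \<in> S \<and> (\<forall>y\<in>S. dist h (proj S h) \<le> dist h y)"
    unfolding proj_def by (rule theI')
  then show "proj S h \<in> S" "y \<in> S \<Longrightarrow> dist h (proj S h) \<le> dist h y"
    by auto
qed

lemma proj_eqI: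
  assumes "closed_subspace S" "x \<in> S" "dist h x \<le> dist h (proj S h)"
  shows "proj S h = x"
proof (rule any_closest_point_unique)
  show "convex S" "closed S"
    using assms(1) by (auto simp: closed_subspace_def subspace_imp_convex)
  show "\<forall>z\<in>S. dist h x \<le> dist h z"
    using assms dist_proj_le order_trans by blast
qed (use assms proj_in dist_proj_le in auto)

lemma cyclic_le_imp_eq:
  fixes f :: "nat \<Rightarrow> 'a::order"
  assumes step: "\<And>i. i < n \<Longrightarrow> f i \<le> f ((i + 1) mod n)" and "i < n" "j < n"
  shows "f i = f j"
proof -
  have mono: "f i \<le> f j" if "i \<le> j" "j < n" for i j
    using that
  proof (induction j)
    case (Suc j)
    then show ?case
      using step[of j] by (cases "i = Suc j") (auto intro: order_trans)
  qed simp
  have wrap: "f (n - 1) \<le> f 0"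
    using step[of "n - 1"] \<open>i < n\<close> by simp
  have "f j \<le> f i" if "i < n" "j < n" for i j
  proof -
    have "f j \<le> f (n - 1)" "f 0 \<le> f i"
      using mono that by auto
    then show ?thesis
      using wrap by (meson order_trans)
  qed
  then show ?thesis
    using assms(2,3) by (simp add: order_antisym)
qed

theorem theorem9:
  fixes h :: "'a::{real_inner,complete_space}"
    and L :: "'a set set"
  assumes "L \<noteq> {}"
    and "\<forall>b\<in>L. closed_subspace b"
  shows "L_logic L (\<lambda>A. {b \<in> L. proj (star A) h \<in> b})"
  unfolding L_logic_def
proof (intro conjI allI impI)
  have star_L: "closed_subspace (star A)" if "A \<subseteq> L" for A
    using that assms(2) by (auto intro: closed_subspace_star)
  show "A \<subseteq> {b \<in> L. proj (star A) h \<in> b}" if "A \<subseteq> L" for A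
    using proj_in[OF star_L[OF that]] that by (auto simp: star_def)
  fix n :: nat and As :: "nat \<Rightarrow> 'a set set"
  assume "1 \<le> n"
    and H: "(\<forall>i<n. As i \<subseteq> L) \<and> (\<forall>i<n. As i \<subseteq> {b \<in> L. proj (star (As ((i + 1) mod n))) h \<in> b})"
  define p where "p i = proj (star (As i)) h" for i
  have p_next: "p ((i + 1) mod n) \<in> star (As i)" if "i < n" for i
    using H that unfolding p_def star_def by blast
  have "dist h (p i) \<le> dist h (p ((i + 1) mod n))" if "i < n" for i
    using dist_proj_le[OF star_L p_next] H that unfolding p_def by blast
  then have "dist h (p (1 mod n)) = dist h (p 0)"
    by (rule cyclic_le_imp_eq) (use \<open>1 \<le> n\<close> in auto)
  then have "p 0 = p (1 mod n)"
    using proj_eqI[OF star_L, of "As 0"] p_next[of 0] H \<open>1 \<le> n\<close> unfolding p_def by simp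
  then show "{b \<in> L. proj (star (As 0)) h \<in> b} = {b \<in> L. proj (star (As (1 mod n))) h \<in> b}"
    unfolding p_def by simp
qed

end
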